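(* Let $G$ be a connected graph with $n$ vertices, and let $L$ be a list-assignment of $G$. If $|L(v)|\ge \deg(v)+1$ for all $v\in V(G)$ and $|L(w)|\ge \deg(w)+2$ for at least one $w\in V(G)$, then $\mathcal{C}(G,L)$ is connected and has diameter at most $\tfrac12(3n^2+5n)$.
   Context: A list-assignment $L$ of a graph $G$ assigns to each vertex $v$ a finite set $L(v)\subseteq\mathbb{N}$. A (proper) $L$-colouring is a proper colouring $\varphi:V(G)\to\mathbb{N}$ with $\varphi(v)\in L(v)$ for all $v$. A recolouring step changes the colour of a single vertex $v$ to another colour of $L(v)$ so that the result is again a proper $L$-colouring. The list colouring reconfiguration graph $\mathcal{C}(G,L)$ has as vertices all proper $L$-colourings of $G$, two being adjacent if one is obtained from the other by a single recolouring step. $\deg(v)$ is the number of neighbours of $v$. *)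

theory Defs
  imports Main
begin

definition simple_graph :: "'a set \<Rightarrow> ('a \<Rightarrow> 'a \<Rightarrow> bool) \<Rightarrow> bool" where
  "simple_graph V E \<longleftrightarrow> finite V \<and> (\<forall>u v. E u v \<longrightarrow> u \<in> V \<and> v \<in> V)
     \<and> (\<forall>u v. E u v \<longrightarrow> E v u) \<and> (\<forall>v. \<not> E v v)"

definition graph_connected :: "'a set \<Rightarrow> ('a \<Rightarrow> 'a \<Rightarrow> bool) \<Rightarrow> bool" where
  "graph_connected V E \<longleftrightarrow> (\<forall>u\<in>V. \<forall>v\<in>V. (u, v) \<in> {(x, y). E x y}\<^sup>*)"

definition degree :: "'a set \<Rightarrow> ('a \<Rightarrow> 'a \<Rightarrow> bool) \<Rightarrow> 'a \<Rightarrow> nat" where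
  "degree V E v = card {u \<in> V. E v u}"

text \<open>Proper L-colourings; values outside V are fixed to undefined so that colourings
  are determined by their restriction to V.\<close>
definition L_colouring :: "'a set \<Rightarrow> ('a \<Rightarrow> 'a \<Rightarrow> bool) \<Rightarrow> ('a \<Rightarrow> nat set) \<Rightarrow> ('a \<Rightarrow> nat) \<Rightarrow> bool" where
  "L_colouring V E L \<phi> \<longleftrightarrow> (\<forall>v\<in>V. \<phi> v \<in> L v) \<and> (\<forall>u v. E u v \<longrightarrow> \<phi> u \<noteq> \<phi> v)
     \<and> (\<forall>v. v \<notin> V \<longrightarrow> \<phi> v = undefined)"

definition recolour_step :: "'a set \<Rightarrow> ('a \<Rightarrow> 'a \<Rightarrow> bool) \<Rightarrow> ('a \<Rightarrow> nat set) \<Rightarrow> (('a \<Rightarrow> nat) \<times> ('a \<Rightarrow> nat)) set" where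
  "recolour_step V E L = {(\<phi>, \<psi>). L_colouring V E L \<phi> \<and> L_colouring V E L \<psi>
     \<and> (\<exists>v\<in>V. \<phi> v \<noteq> \<psi> v \<and> (\<forall>u. u \<noteq> v \<longrightarrow> \<phi> u = \<psi> u))}"

end

theory Submission
  imports Defs
begin

text \<open>
  Induction on the number of vertices. Let w be a vertex with slack and level the BFS distance
  from w; a vertex v of maximal level is not a cut vertex. First recolour \<alpha> so that v gets the
  colour c = \<beta> v. The neighbours of v coloured c are cleared one at a time with at most two steps
  each, unless both v and such a neighbour s are blocked (the neighbours of a blocked vertex use
  every other colour of its list exactly once). In that case s is recoloured by a cascade along
  parents towards w, which must stop because the slack at w means w is never blocked; it takes at
  most level v + 1 steps and leaves no neighbour of v coloured c. Altogether this costs at most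
  3n + 1 steps. Then fix v, delete it and remove c from the lists of its neighbours: the list
  conditions and the slack at w survive, so induction applies, and summing 3m + 1 over m \<le> n
  gives (3n^2 + 5n)/2.
\<close>

lemma relpow_image:
  assumes "\<And>a b. (a, b) \<in> R \<Longrightarrow> (f a, f b) \<in> S" and "(x, y) \<in> R ^^ k"
  shows "(f x, f y) \<in> S ^^ k"
  using assms(2)
proof (induction k arbitrary: y)
  case 0
  then show ?case by simp
next
  case (Suc k)
  then obtain z where "(x, z) \<in> R ^^ k" "(z, y) \<in> R" by auto
  with Suc.IH assms(1) show ?case by (meson relpow_Suc_I)
qed

lemma recolour_step_colouring: "(\<alpha>, \<beta>) \<in> recolour_step V E L \<Longrightarrow> L_colouring V E L \<beta>"
  unfolding recolour_step_def by blast

lemma recolour_steps_colouring: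
  "(\<alpha>, \<beta>) \<in> recolour_step V E L ^^ k \<Longrightarrow> L_colouring V E L \<alpha> \<Longrightarrow> L_colouring V E L \<beta>"
  by (induction k arbitrary: \<beta>) (auto dest: recolour_step_colouring)

definition blocked :: "('a \<Rightarrow> 'a \<Rightarrow> bool) \<Rightarrow> ('a \<Rightarrow> nat set) \<Rightarrow> ('a \<Rightarrow> nat) \<Rightarrow> 'a \<Rightarrow> bool" where
  "blocked E L \<alpha> x \<longleftrightarrow> (\<forall>b \<in> L x - {\<alpha> x}. \<exists>y. E x y \<and> \<alpha> y = b)"

locale sgraph =
  fixes V :: "'a set" and E :: "'a \<Rightarrow> 'a \<Rightarrow> bool"
  assumes simple: "simple_graph V E"
begin

lemma finite_V: "finite V"
  using simple unfolding simple_graph_def by blast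

lemma edge_in_V: "E u v \<Longrightarrow> u \<in> V" "E u v \<Longrightarrow> v \<in> V"
  using simple unfolding simple_graph_def by blast+

lemma edge_sym: "E u v \<Longrightarrow> E v u"
  using simple unfolding simple_graph_def by blast

lemma edge_irrefl: "\<not> E v v"
  using simple unfolding simple_graph_def by blast

lemma recolour_step_fun_upd:
  assumes "L_colouring V E L \<alpha>" "x \<in> V" "b \<in> L x" "b \<noteq> \<alpha> x" "\<forall>y. E x y \<longrightarrow> \<alpha> y \<noteq> b"
  shows "(\<alpha>, \<alpha>(x := b)) \<in> recolour_step V E L"
proof -
  have "(\<alpha>(x := b)) u \<noteq> (\<alpha>(x := b)) y" if "E u y" for u y
    using assms(1,5) that edge_sym[OF that] unfolding L_colouring_def by (cases "u = x"; cases "y = x") auto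
  then have "L_colouring V E L (\<alpha>(x := b))"
    using assms(1-3) unfolding L_colouring_def by auto
  with assms show ?thesis
    unfolding recolour_step_def by auto
qed

lemma not_blocked_recolour:
  assumes "L_colouring V E L \<alpha>" "x \<in> V" "\<not> blocked E L \<alpha> x"
  obtains b where "b \<noteq> \<alpha> x" "(\<alpha>, \<alpha>(x := b)) \<in> recolour_step V E L"
  using assms recolour_step_fun_upd unfolding blocked_def by blast

end

definition delete_vertex_edges :: "('a \<Rightarrow> 'a \<Rightarrow> bool) \<Rightarrow> 'a \<Rightarrow> 'a \<Rightarrow> 'a \<Rightarrow> bool" where
  "delete_vertex_edges E v x y \<longleftrightarrow> E x y \<and> x \<noteq> v \<and> y \<noteq> v"

text \<open>The lists of G - v once v is fixed to colour c.\<close>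
definition forbid_at_neighbours ::
    "('a \<Rightarrow> 'a \<Rightarrow> bool) \<Rightarrow> ('a \<Rightarrow> nat set) \<Rightarrow> 'a \<Rightarrow> nat \<Rightarrow> 'a \<Rightarrow> nat set" where
  "forbid_at_neighbours E L v c u = (if E u v then L u - {c} else L u)"

lemma simple_graph_delete_vertex:
  "simple_graph V E \<Longrightarrow> simple_graph (V - {v}) (delete_vertex_edges E v)"
  unfolding simple_graph_def delete_vertex_edges_def by auto

lemma L_colouring_delete_vertex:
  assumes "L_colouring V E L \<gamma>" "\<gamma> v = c"
  shows "L_colouring (V - {v}) (delete_vertex_edges E v) (forbid_at_neighbours E L v c) (\<gamma>(v := undefined))"
  using assms unfolding L_colouring_def delete_vertex_edges_def forbid_at_neighbours_def by auto

context sgraph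
begin

lemma degree_delete_vertex:
  assumes "u \<in> V" "u \<noteq> v"
  shows "degree V E u = degree (V - {v}) (delete_vertex_edges E v) u + (if E u v then 1 else 0)"
proof -
  let ?N = "{x \<in> V. E u x}"
  have "{x \<in> V - {v}. delete_vertex_edges E v u x} = ?N - {v}"
    using assms unfolding delete_vertex_edges_def by auto
  moreover have "finite ?N"
    using finite_V by simp
  moreover have "v \<in> ?N \<longleftrightarrow> E u v"
    using edge_in_V(2)[of u v] by blast
  ultimately show ?thesis
    unfolding degree_def using card_Suc_Diff1[of ?N v] by (cases "E u v") simp_all
qed

lemma lists_exceed_degree_delete_vertex:
  assumes "u \<in> V" "u \<noteq> v" "finite (L u)" "degree V E u + j \<le> card (L u)"
  shows "degree (V - {v}) (delete_vertex_edges E v) u + j \<le> card (forbid_at_neighbours E L v c u)"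
proof (cases "E u v")
  case True
  then have "card (L u) \<le> card (forbid_at_neighbours E L v c u) + 1"
    using assms(3) card_Suc_Diff1[of "L u" c] unfolding forbid_at_neighbours_def by (cases "c \<in> L u") simp_all
  with True show ?thesis
    using assms(4) degree_delete_vertex[OF assms(1,2)] by simp
next
  case False
  then show ?thesis
    using assms(4) degree_delete_vertex[OF assms(1,2)] unfolding forbid_at_neighbours_def by simp
qed

lemma L_colouring_undelete_vertex:
  assumes "v \<in> V" "c \<in> L v"
    and "L_colouring (V - {v}) (delete_vertex_edges E v) (forbid_at_neighbours E L v c) \<gamma>"
  shows "L_colouring V E L (\<gamma>(v := c))"
proof -
  have lists: "\<gamma> u \<in> L u" and avoid_c: "E u v \<Longrightarrow> \<gamma> u \<noteq> c" if "u \<in> V" "u \<noteq> v" for u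
    using assms(3) that unfolding L_colouring_def forbid_at_neighbours_def by (auto split: if_splits)
  have "(\<gamma>(v := c)) x \<noteq> (\<gamma>(v := c)) y" if "E x y" for x y
  proof -
    consider "x = v" | "y = v" | "x \<noteq> v" "y \<noteq> v" by blast
    then show ?thesis
    proof cases
      case 1
      moreover have "y \<noteq> v"
        using that 1 edge_irrefl by blast
      ultimately show ?thesis
        using avoid_c[OF edge_in_V(2)[OF that]] edge_sym[OF that] by auto
    next
      case 2
      moreover have "x \<noteq> v"
        using that 2 edge_irrefl by blast
      ultimately show ?thesis
        using avoid_c[OF edge_in_V(1)[OF that]] that by auto
    next
      case 3
      then show ?thesis
        using that assms(3) unfolding L_colouring_def delete_vertex_edges_def by auto
    qed
  qed
  then show ?thesis
    using assms lists unfolding L_colouring_def by auto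
qed

lemma recolour_step_undelete_vertex:
  assumes "v \<in> V" "c \<in> L v"
    and "(\<gamma>, \<gamma>') \<in> recolour_step (V - {v}) (delete_vertex_edges E v) (forbid_at_neighbours E L v c)"
  shows "(\<gamma>(v := c), \<gamma>'(v := c)) \<in> recolour_step V E L"
  using assms L_colouring_undelete_vertex[of v c L] unfolding recolour_step_def by auto

lemma recolour_steps_undelete_vertex:
  assumes "v \<in> V" "c \<in> L v" "\<gamma> v = c" "\<gamma>' v = c"
    and "(\<gamma>(v := undefined), \<gamma>'(v := undefined))
           \<in> recolour_step (V - {v}) (delete_vertex_edges E v) (forbid_at_neighbours E L v c) ^^ k"
  shows "(\<gamma>, \<gamma>') \<in> recolour_step V E L ^^ k"
proof -
  have "(\<gamma>(v := undefined, v := c), \<gamma>'(v := undefined, v := c)) \<in> recolour_step V E L ^^ k"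
    using relpow_image[OF recolour_step_undelete_vertex[where L = L, OF assms(1,2)] assms(5)] .
  moreover have "\<gamma>(v := undefined, v := c) = \<gamma>" "\<gamma>'(v := undefined, v := c) = \<gamma>'"
    using assms(3,4) by auto
  ultimately show ?thesis
    by simp
qed

end

definition neighbours_coloured :: "'a set \<Rightarrow> ('a \<Rightarrow> 'a \<Rightarrow> bool) \<Rightarrow> ('a \<Rightarrow> nat) \<Rightarrow> 'a \<Rightarrow> nat \<Rightarrow> 'a set" where
  "neighbours_coloured V E \<alpha> v c = {y \<in> V. E v y \<and> \<alpha> y = c}"

locale deg_plus_one_lists = sgraph V E for V :: "'a set" and E +
  fixes L :: "'a \<Rightarrow> nat set"
  assumes finite_lists: "\<forall>v\<in>V. finite (L v)"
    and lists_exceed_degree: "\<forall>v\<in>V. degree V E v + 1 \<le> card (L v)"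
begin

lemma blocked_bij_betw:
  assumes "L_colouring V E L \<alpha>" "x \<in> V" "blocked E L \<alpha> x"
  shows "bij_betw \<alpha> {y \<in> V. E x y} (L x - {\<alpha> x})"
proof -
  let ?N = "{y \<in> V. E x y}"
  have fin: "finite ?N"
    using finite_V by simp
  have "\<alpha> x \<in> L x" "finite (L x)"
    using assms(1,2) finite_lists unfolding L_colouring_def by auto
  then have "card (L x - {\<alpha> x}) + 1 = card (L x)"
    using card_Suc_Diff1 by fastforce
  moreover have "card ?N + 1 \<le> card (L x)"
    using lists_exceed_degree assms(2) unfolding degree_def by simp
  moreover have sub: "L x - {\<alpha> x} \<subseteq> \<alpha> ` ?N"
  proof
    fix b
    assume "b \<in> L x - {\<alpha> x}"
    then obtain y where "E x y" "\<alpha> y = b"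
      using assms(3) unfolding blocked_def by blast
    then show "b \<in> \<alpha> ` ?N"
      using edge_in_V(2) by blast
  qed
  moreover have "card (L x - {\<alpha> x}) \<le> card (\<alpha> ` ?N)"
    using sub fin by (simp add: card_mono)
  moreover have "card (\<alpha> ` ?N) \<le> card ?N"
    using fin by (rule card_image_le)
  ultimately have "card (\<alpha> ` ?N) = card ?N" "L x - {\<alpha> x} = \<alpha> ` ?N"
    using card_seteq[OF finite_imageI[OF fin] sub] by linarith+
  then show ?thesis
    using fin by (simp add: bij_betw_def eq_card_imp_inj_on)
qed

lemma blocked_card_lists:
  assumes "L_colouring V E L \<alpha>" "x \<in> V" "blocked E L \<alpha> x"
  shows "card (L x) = degree V E x + 1"
proof -
  have "\<alpha> x \<in> L x" "finite (L x)"
    using assms(1,2) finite_lists unfolding L_colouring_def by auto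
  then show ?thesis
    using bij_betw_same_card[OF blocked_bij_betw[OF assms]] card_Suc_Diff1[of "L x" "\<alpha> x"]
    unfolding degree_def by simp
qed

lemma clear_neighbour:
  assumes "L_colouring V E L \<alpha>" "E v s" "\<alpha> s = c" "\<not> (blocked E L \<alpha> s \<and> blocked E L \<alpha> v)"
  shows "\<exists>\<alpha>' k. (\<alpha>, \<alpha>') \<in> recolour_step V E L ^^ k \<and> k \<le> 2
           \<and> neighbours_coloured V E \<alpha>' v c = neighbours_coloured V E \<alpha> v c - {s}"
proof -
  have s: "s \<in> V" and v: "v \<in> V" and "s \<noteq> v"
    using assms(2) edge_in_V edge_irrefl by blast+
  have "\<alpha> v \<noteq> c"
    using assms(1-3) unfolding L_colouring_def by auto
  show ?thesis
  proof (cases "blocked E L \<alpha> s")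
    case False
    then obtain b where "b \<noteq> \<alpha> s" "(\<alpha>, \<alpha>(s := b)) \<in> recolour_step V E L"
      using not_blocked_recolour[OF assms(1) s] by blast
    moreover have "neighbours_coloured V E (\<alpha>(s := b)) v c = neighbours_coloured V E \<alpha> v c - {s}"
      using calculation(1) assms(3) unfolding neighbours_coloured_def by auto
    ultimately show ?thesis
      by (intro exI[of _ "\<alpha>(s := b)"] exI[of _ 1]) auto
  next
    case True
    with assms(4) obtain b where b: "b \<noteq> \<alpha> v" and step1: "(\<alpha>, \<alpha>(v := b)) \<in> recolour_step V E L"
      using not_blocked_recolour[OF assms(1) v] by blast
    \<comment> \<open>s is blocked, so v is its only neighbour coloured \<alpha> v, and that colour becomes free at s\<close>
    have bij: "bij_betw \<alpha> {y \<in> V. E s y} (L s - {\<alpha> s})"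
      using blocked_bij_betw[OF assms(1) s True] .
    have sv: "E s v"
      using edge_sym[OF assms(2)] .
    have "\<alpha> v \<in> L s"
      using bij_betwE[OF bij] sv v by blast
    moreover have "\<alpha> v \<noteq> (\<alpha>(v := b)) s"
      using \<open>s \<noteq> v\<close> \<open>\<alpha> v \<noteq> c\<close> assms(3) by simp
    moreover have "(\<alpha>(v := b)) y \<noteq> \<alpha> v" if "E s y" for y
    proof (cases "y = v")
      case False
      then show ?thesis
        using bij_betw_imp_inj_on[OF bij] that sv v edge_in_V(2)[OF that] unfolding inj_on_def by auto
    qed (use b in simp)
    ultimately have step2: "(\<alpha>(v := b), \<alpha>(v := b, s := \<alpha> v)) \<in> recolour_step V E L"
      using recolour_step_fun_upd[OF recolour_step_colouring[OF step1] s] by blast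
    have "(\<alpha>, \<alpha>(v := b, s := \<alpha> v)) \<in> recolour_step V E L ^^ 2"
      using step1 step2 by (auto simp: numeral_2_eq_2 intro: relpow_Suc_I relpow_Suc_I2)
    moreover have "neighbours_coloured V E (\<alpha>(v := b, s := \<alpha> v)) v c = neighbours_coloured V E \<alpha> v c - {s}"
      using \<open>\<alpha> v \<noteq> c\<close> edge_irrefl unfolding neighbours_coloured_def by auto
    ultimately show ?thesis
      by blast
  qed
qed

end

locale levelling = sgraph V E for V :: "'a set" and E +
  fixes root :: 'a and level :: "'a \<Rightarrow> nat"
  assumes root_in_V: "root \<in> V" and level_root: "level root = 0"
    and level_edge: "E x y \<Longrightarrow> level x \<le> level y + 1"
    and level_parent: "x \<in> V \<Longrightarrow> x \<noteq> root \<Longrightarrow> \<exists>p. E x p \<and> level p + 1 = level x"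
begin

lemma level_attained:
  assumes "x \<in> V" "j \<le> level x"
  shows "\<exists>y\<in>V. level y = j"
  using assms
proof (induction "level x" arbitrary: x rule: less_induct)
  case less
  show ?case
  proof (cases "j = level x")
    case False
    with less.prems have "x \<noteq> root"
      using level_root by auto
    then obtain p where p: "E x p" "level p + 1 = level x"
      using level_parent less.prems(1) by blast
    with False less.prems(2) show ?thesis
      using less.hyps[of p] edge_in_V(2)[OF p(1)] by simp
  qed (use less.prems in blast)
qed

lemma level_less_card: "x \<in> V \<Longrightarrow> level x < card V"
proof -
  assume "x \<in> V"
  then have "{0..level x} \<subseteq> level ` V"
    using level_attained by fastforce
  then have "card {0..level x} \<le> card (level ` V)"
    using finite_V by (intro card_mono) auto
  also have "\<dots> \<le> card V"
    using finite_V by (rule card_image_le)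
  finally show ?thesis
    by simp
qed

lemma connected_delete_farthest:
  assumes "\<forall>x\<in>V. level x \<le> level v"
  shows "graph_connected (V - {v}) (delete_vertex_edges E v)"
proof -
  let ?R = "{(x, y). delete_vertex_edges E v x y}"
  have to_root: "(x, root) \<in> ?R\<^sup>*" if "x \<in> V" "x \<noteq> v" for x
    using that
  proof (induction "level x" arbitrary: x rule: less_induct)
    case less
    show ?case
    proof (cases "x = root")
      case False
      then obtain p where p: "E x p" "level p + 1 = level x"
        using level_parent less.prems(1) by blast
      then have "p \<noteq> v"
        using assms less.prems by fastforce
      then have "(x, p) \<in> ?R"
        using p(1) less.prems(2) unfolding delete_vertex_edges_def by simp
      moreover have "(p, root) \<in> ?R\<^sup>*"
        using less.hyps[of p] p edge_in_V(2) \<open>p \<noteq> v\<close> by auto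
      ultimately show ?thesis
        by (rule converse_rtrancl_into_rtrancl)
    qed simp
  qed
  have "sym ?R"
  proof (rule symI)
    fix a b
    assume "(a, b) \<in> ?R"
    then show "(b, a) \<in> ?R"
      using edge_sym[of a b] unfolding delete_vertex_edges_def by simp
  qed
  show ?thesis
    unfolding graph_connected_def
  proof (intro ballI)
    fix x y
    assume "x \<in> V - {v}" "y \<in> V - {v}"
    then have "(x, root) \<in> ?R\<^sup>*" "(root, y) \<in> ?R\<^sup>*"
      using to_root symD[OF sym_rtrancl[OF \<open>sym ?R\<close>]] by auto
    then show "(x, y) \<in> ?R\<^sup>*"
      by (rule rtrancl_trans)
  qed
qed

lemma farthest_ne_root:
  assumes "\<forall>x\<in>V. level x \<le> level v" "x \<in> V" "x \<noteq> v"
  shows "root \<noteq> v"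
proof
  assume "root = v"
  with assms obtain p where "level p + 1 = level x"
    using level_parent by blast
  with assms \<open>root = v\<close> level_root show False
    by fastforce
qed

end

lemma (in sgraph) levelling_exists:
  assumes "graph_connected V E" "root \<in> V"
  obtains level where "levelling V E root level"
proof
  let ?R = "{(x, y). E x y}"
  define level where "level x = (LEAST k. (root, x) \<in> ?R ^^ k)" for x
  have reach: "(root, x) \<in> ?R ^^ level x" if "x \<in> V" for x
  proof -
    have "(root, x) \<in> ?R\<^sup>*"
      using assms that unfolding graph_connected_def by blast
    then obtain k where "(root, x) \<in> ?R ^^ k"
      unfolding rtrancl_power by blast
    then show ?thesis
      unfolding level_def by (rule LeastI)
  qed
  have level_le: "(root, x) \<in> ?R ^^ k \<Longrightarrow> level x \<le> k" for x k
    unfolding level_def by (rule Least_le)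
  have level_edge: "level x \<le> level y + 1" if "E x y" for x y
    using level_le relpow_Suc_I[OF reach[OF edge_in_V(2)[OF that]], of x] edge_sym[OF that] by simp
  have "\<exists>p. E x p \<and> level p + 1 = level x" if x: "x \<in> V" and not_root: "x \<noteq> root" for x
  proof -
    obtain m where m: "level x = Suc m"
      using reach[OF x] not_root by (cases "level x") auto
    then obtain p where "(root, p) \<in> ?R ^^ m" "E p x"
      using reach[OF x] by (auto elim: relpow_Suc_E)
    with m show ?thesis
      using level_le[of p m] level_edge[of x p] edge_sym[of p x] by auto
  qed
  then show "levelling V E root level"
    using level_edge assms(2) by unfold_locales (auto simp: level_def)
qed

locale slack_levelling = deg_plus_one_lists V E L + levelling V E root level
  for V :: "'a set" and E L root level +
  assumes root_slack: "degree V E root + 2 \<le> card (L root)"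
begin

lemma root_not_blocked: "L_colouring V E L \<alpha> \<Longrightarrow> \<not> blocked E L \<alpha> root"
  using blocked_card_lists[OF _ root_in_V] root_slack by fastforce

text \<open>
  If x is blocked, first recolour its parent p recursively and then give x the old colour of p.
  The recursion ends at the latest at the root, which is never blocked.
\<close>
lemma cascade_recolour:
  assumes "L_colouring V E L \<alpha>" "x \<in> V"
  shows "\<exists>\<alpha>' k. (\<alpha>, \<alpha>') \<in> recolour_step V E L ^^ k \<and> k \<le> level x + 1 \<and> \<alpha>' x \<noteq> \<alpha> x
     \<and> (\<forall>y. \<alpha>' y \<noteq> \<alpha> y \<longrightarrow>
          y = x \<or> level y + 2 \<le> level x \<or> (level y + 1 = level x \<and> E x y \<and> \<alpha>' y \<noteq> \<alpha> x))"
  using assms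
proof (induction "level x" arbitrary: x \<alpha> rule: less_induct)
  case less
  note \<alpha> = less.prems(1) and x = less.prems(2)
  show ?case
  proof (cases "blocked E L \<alpha> x")
    case False
    then obtain b where "b \<noteq> \<alpha> x" "(\<alpha>, \<alpha>(x := b)) \<in> recolour_step V E L"
      using not_blocked_recolour[OF \<alpha> x] by blast
    then show ?thesis
      by (intro exI[of _ "\<alpha>(x := b)"] exI[of _ 1]) auto
  next
    case True
    then have "x \<noteq> root"
      using root_not_blocked[OF \<alpha>] by blast
    then obtain p where p: "E x p" "level p + 1 = level x"
      using level_parent x by blast
    then have "p \<in> V" "p \<noteq> x"
      using edge_in_V(2) edge_irrefl by blast+
    then obtain \<alpha>1 k1 where steps1: "(\<alpha>, \<alpha>1) \<in> recolour_step V E L ^^ k1" and "k1 \<le> level p + 1"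
      and "\<alpha>1 p \<noteq> \<alpha> p"
      and changed1: "\<And>y. \<alpha>1 y \<noteq> \<alpha> y \<Longrightarrow>
          y = p \<or> level y + 2 \<le> level p \<or> (level y + 1 = level p \<and> E p y \<and> \<alpha>1 y \<noteq> \<alpha> p)"
      using less.hyps[of p \<alpha>] p(2) \<alpha> by auto
    have \<alpha>1: "L_colouring V E L \<alpha>1"
      using recolour_steps_colouring[OF steps1 \<alpha>] .
    \<comment> \<open>the recursive cascade stays at levels below that of p, so it leaves x and its other neighbours alone\<close>
    have unchanged: "\<alpha>1 y = \<alpha> y" if "y = x \<or> (E x y \<and> y \<noteq> p)" for y
    proof -
      have "level p \<le> level y"
        using that p level_edge[of x y] by auto
      then show ?thesis
        using that changed1[of y] \<open>p \<noteq> x\<close> by fastforce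
    qed
    have bij: "bij_betw \<alpha> {y \<in> V. E x y} (L x - {\<alpha> x})"
      using blocked_bij_betw[OF \<alpha> x True] .
    have "\<alpha> p \<in> L x" "\<alpha> p \<noteq> \<alpha>1 x"
      using bij_betwE[OF bij] p(1) \<open>p \<in> V\<close> unchanged[of x] by auto
    moreover have "\<alpha>1 y \<noteq> \<alpha> p" if "E x y" for y
    proof (cases "y = p")
      case False
      then show ?thesis
        using unchanged[of y] bij_betw_imp_inj_on[OF bij] that p(1) \<open>p \<in> V\<close> edge_in_V(2)[OF that]
        unfolding inj_on_def by auto
    qed (use \<open>\<alpha>1 p \<noteq> \<alpha> p\<close> in simp)
    ultimately have step2: "(\<alpha>1, \<alpha>1(x := \<alpha> p)) \<in> recolour_step V E L"
      using recolour_step_fun_upd[OF \<alpha>1 x] by blast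
    have "\<alpha>1 p \<noteq> \<alpha> x"
      using \<alpha>1 p(1) unchanged[of x] unfolding L_colouring_def by metis
    let ?\<alpha>' = "\<alpha>1(x := \<alpha> p)"
    have "\<forall>y. ?\<alpha>' y \<noteq> \<alpha> y \<longrightarrow>
        y = x \<or> level y + 2 \<le> level x \<or> (level y + 1 = level x \<and> E x y \<and> ?\<alpha>' y \<noteq> \<alpha> x)"
    proof (intro allI impI)
      fix y
      assume "?\<alpha>' y \<noteq> \<alpha> y"
      show "y = x \<or> level y + 2 \<le> level x \<or> (level y + 1 = level x \<and> E x y \<and> ?\<alpha>' y \<noteq> \<alpha> x)"
      proof (cases "y = x")
        case False
        with \<open>?\<alpha>' y \<noteq> \<alpha> y\<close> have "\<alpha>1 y \<noteq> \<alpha> y"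
          by simp
        from changed1[OF this] show ?thesis
          using p False \<open>\<alpha>1 p \<noteq> \<alpha> x\<close> by auto
      qed simp
    qed
    moreover have "(\<alpha>, ?\<alpha>') \<in> recolour_step V E L ^^ Suc k1"
      using steps1 step2 by (rule relpow_Suc_I)
    moreover have "Suc k1 \<le> level x + 1" "?\<alpha>' x \<noteq> \<alpha> x"
      using \<open>k1 \<le> level p + 1\<close> p \<open>\<alpha> p \<noteq> \<alpha>1 x\<close> unchanged[of x] by auto
    ultimately show ?thesis
      by blast
  qed
qed

lemma recolour_farthest_blocked:
  assumes \<alpha>: "L_colouring V E L \<alpha>" and farthest: "\<forall>x\<in>V. level x \<le> level v" and "c \<in> L v"
    and s: "E v s" "\<alpha> s = c" and blocked: "blocked E L \<alpha> s" "blocked E L \<alpha> v"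
  shows "\<exists>\<alpha>' k. (\<alpha>, \<alpha>') \<in> recolour_step V E L ^^ k \<and> k \<le> level v + 2 \<and> \<alpha>' v = c"
proof -
  have "v \<in> V" "s \<in> V" "s \<noteq> v"
    using s(1) edge_in_V edge_irrefl by blast+
  have "\<alpha> v \<noteq> c"
    using \<alpha> s unfolding L_colouring_def by auto
  have inj_v: "inj_on \<alpha> {y \<in> V. E v y}"
    using bij_betw_imp_inj_on[OF blocked_bij_betw[OF \<alpha> \<open>v \<in> V\<close> blocked(2)]] .
  have "level s \<le> level v"
    using farthest \<open>s \<in> V\<close> by blast
  obtain \<alpha>1 k1 where steps1: "(\<alpha>, \<alpha>1) \<in> recolour_step V E L ^^ k1" and "k1 \<le> level s + 1"
    and "\<alpha>1 s \<noteq> \<alpha> s"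
    and changed1: "\<And>y. \<alpha>1 y \<noteq> \<alpha> y \<Longrightarrow>
        y = s \<or> level y + 2 \<le> level s \<or> (level y + 1 = level s \<and> E s y \<and> \<alpha>1 y \<noteq> \<alpha> s)"
    using cascade_recolour[OF \<alpha> \<open>s \<in> V\<close>] by blast
  have \<alpha>1: "L_colouring V E L \<alpha>1"
    using recolour_steps_colouring[OF steps1 \<alpha>] .
  have "\<alpha>1 v = \<alpha> v"
    using changed1[of v] \<open>s \<noteq> v\<close> \<open>level s \<le> level v\<close> by fastforce
  \<comment> \<open>v is blocked, so s is its only neighbour coloured c\<close>
  moreover have "\<alpha>1 y \<noteq> c" if "E v y" for y
  proof (cases "\<alpha>1 y = \<alpha> y")
    case True
    have "y \<noteq> s"
      using True \<open>\<alpha>1 s \<noteq> \<alpha> s\<close> by blast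
    then have "\<alpha> y \<noteq> \<alpha> s"
      using inj_v that s(1) edge_in_V(2) unfolding inj_on_def by blast
    with True s(2) show ?thesis
      by simp
  next
    case False
    have "level v \<le> level y + 1"
      using level_edge[OF that] .
    with changed1[OF False] \<open>level s \<le> level v\<close> \<open>\<alpha>1 s \<noteq> \<alpha> s\<close> s(2) show ?thesis
      by auto
  qed
  ultimately have "(\<alpha>1, \<alpha>1(v := c)) \<in> recolour_step V E L"
    using recolour_step_fun_upd[OF \<alpha>1 \<open>v \<in> V\<close> \<open>c \<in> L v\<close>] \<open>\<alpha> v \<noteq> c\<close> by auto
  with steps1 have "(\<alpha>, \<alpha>1(v := c)) \<in> recolour_step V E L ^^ Suc k1"
    by (rule relpow_Suc_I)
  with \<open>k1 \<le> level s + 1\<close> \<open>level s \<le> level v\<close> show ?thesis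
    by (intro exI[of _ "\<alpha>1(v := c)"] exI[of _ "Suc k1"]) auto
qed

lemma recolour_farthest:
  assumes "L_colouring V E L \<alpha>" and v: "v \<in> V" and farthest: "\<forall>x\<in>V. level x \<le> level v"
    and c: "c \<in> L v"
  shows "\<exists>\<alpha>' k. (\<alpha>, \<alpha>') \<in> recolour_step V E L ^^ k
           \<and> k \<le> 2 * card (neighbours_coloured V E \<alpha> v c) + level v + 2 \<and> \<alpha>' v = c"
  using assms(1)
proof (induction "card (neighbours_coloured V E \<alpha> v c)" arbitrary: \<alpha> rule: less_induct)
  case less
  let ?S = "neighbours_coloured V E \<alpha> v c"
  show ?case
  proof (cases "?S = {}")
    case True
    show ?thesis
    proof (cases "\<alpha> v = c")
      case False
      have "\<forall>y. E v y \<longrightarrow> \<alpha> y \<noteq> c"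
        using True edge_in_V(2) unfolding neighbours_coloured_def by blast
      then have "(\<alpha>, \<alpha>(v := c)) \<in> recolour_step V E L"
        using recolour_step_fun_upd[OF less.prems v c] False by auto
      then show ?thesis
        by (intro exI[of _ "\<alpha>(v := c)"] exI[of _ 1]) simp
    qed (intro exI[of _ \<alpha>] exI[of _ 0]; simp)
  next
    case False
    then obtain s where "s \<in> ?S"
      by blast
    then have s: "E v s" "\<alpha> s = c"
      unfolding neighbours_coloured_def by auto
    show ?thesis
    proof (cases "blocked E L \<alpha> s \<and> blocked E L \<alpha> v")
      case True
      then show ?thesis
        using recolour_farthest_blocked[OF less.prems farthest c s] by fastforce
    next
      case False
      then obtain \<alpha>1 k1 where steps1: "(\<alpha>, \<alpha>1) \<in> recolour_step V E L ^^ k1" and "k1 \<le> 2"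
        and S1: "neighbours_coloured V E \<alpha>1 v c = ?S - {s}"
        using clear_neighbour[OF less.prems s] by blast
      have "finite ?S"
        using finite_V unfolding neighbours_coloured_def by simp
      then have card_S1: "card (?S - {s}) + 1 = card ?S"
        using card_Suc_Diff1[OF _ \<open>s \<in> ?S\<close>] by simp
      then obtain \<alpha>2 k2 where "(\<alpha>1, \<alpha>2) \<in> recolour_step V E L ^^ k2"
        and "k2 \<le> 2 * card (?S - {s}) + level v + 2" and "\<alpha>2 v = c"
        using less.hyps[of \<alpha>1] S1 recolour_steps_colouring[OF steps1 less.prems] by auto
      with steps1 \<open>k1 \<le> 2\<close> card_S1 show ?thesis
        by (intro exI[of _ \<alpha>2] exI[of _ "k1 + k2"]) (auto intro: relpow_trans)
    qed
  qed
qed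

lemma recolour_farthest_bound:
  assumes "L_colouring V E L \<alpha>" "v \<in> V" "\<forall>x\<in>V. level x \<le> level v" "c \<in> L v"
  shows "\<exists>\<alpha>' k. (\<alpha>, \<alpha>') \<in> recolour_step V E L ^^ k \<and> k \<le> 3 * card V + 1 \<and> \<alpha>' v = c"
proof -
  have "card (neighbours_coloured V E \<alpha> v c) \<le> card V"
    using finite_V unfolding neighbours_coloured_def by (intro card_mono) auto
  moreover have "level v < card V"
    using level_less_card assms(2) .
  ultimately show ?thesis
    using recolour_farthest[OF assms] by fastforce
qed

end

definition connected_slack_assignment :: "'a set \<Rightarrow> ('a \<Rightarrow> 'a \<Rightarrow> bool) \<Rightarrow> ('a \<Rightarrow> nat set) \<Rightarrow> bool" where
  "connected_slack_assignment V E L \<longleftrightarrow> simple_graph V E \<and> graph_connected V E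
     \<and> (\<forall>v\<in>V. finite (L v)) \<and> (\<forall>v\<in>V. degree V E v + 1 \<le> card (L v))
     \<and> (V \<noteq> {} \<longrightarrow> (\<exists>w\<in>V. degree V E w + 2 \<le> card (L w)))"

lemma connected_slack_assignment_levelling:
  assumes "connected_slack_assignment V E L" "V \<noteq> {}"
  obtains root level where "slack_levelling V E L root level"
proof -
  interpret deg_plus_one_lists V E L
    using assms(1) unfolding connected_slack_assignment_def by unfold_locales auto
  obtain root where "root \<in> V" "degree V E root + 2 \<le> card (L root)"
    using assms unfolding connected_slack_assignment_def by blast
  moreover obtain level where "levelling V E root level"
    using levelling_exists assms(1) \<open>root \<in> V\<close> unfolding connected_slack_assignment_def by blast
  ultimately show ?thesis
    using that deg_plus_one_lists_axioms by (simp add: slack_levelling_def slack_levelling_axioms_def)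
qed

lemma (in slack_levelling) connected_slack_assignment_delete_farthest:
  assumes "\<forall>x\<in>V. level x \<le> level v"
  shows "connected_slack_assignment (V - {v}) (delete_vertex_edges E v) (forbid_at_neighbours E L v c)"
proof -
  let ?E' = "delete_vertex_edges E v" and ?L' = "forbid_at_neighbours E L v c"
  have "finite (?L' u)" if "u \<in> V - {v}" for u
    using finite_lists that unfolding forbid_at_neighbours_def by simp
  moreover have "degree (V - {v}) ?E' u + 1 \<le> card (?L' u)" if "u \<in> V - {v}" for u
    using lists_exceed_degree_delete_vertex[of u v L 1] finite_lists lists_exceed_degree that by simp
  moreover have "\<exists>w\<in>V - {v}. degree (V - {v}) ?E' w + 2 \<le> card (?L' w)" if "V - {v} \<noteq> {}"
  proof -
    have "root \<in> V - {v}"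
      using farthest_ne_root[OF assms] that root_in_V by blast
    then show ?thesis
      using lists_exceed_degree_delete_vertex[of root v L 2] root_slack finite_lists by auto
  qed
  ultimately show ?thesis
    unfolding connected_slack_assignment_def
    using simple_graph_delete_vertex[OF simple] connected_delete_farthest[OF assms] by blast
qed

lemma reconfiguration_distance:
  assumes "connected_slack_assignment V E L" "L_colouring V E L \<alpha>" "L_colouring V E L \<beta>"
  shows "\<exists>k. 2 * k \<le> 3 * (card V)\<^sup>2 + 5 * card V \<and> (\<alpha>, \<beta>) \<in> recolour_step V E L ^^ k"
  using assms
proof (induction "card V" arbitrary: V E L \<alpha> \<beta>)
  case 0
  then have "V = {}"
    unfolding connected_slack_assignment_def simple_graph_def by auto
  with "0.prems"(2,3) have "\<alpha> = \<beta>"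
    unfolding L_colouring_def by auto
  then show ?case
    by (intro exI[of _ 0]) simp
next
  case (Suc n)
  have "V \<noteq> {}"
    using Suc.hyps(2) by auto
  then obtain root level where "slack_levelling V E L root level"
    using connected_slack_assignment_levelling[OF Suc.prems(1)] by blast
  then interpret slack_levelling V E L root level .
  obtain v where v: "v \<in> V" and farthest: "\<forall>x\<in>V. level x \<le> level v"
    using ex_has_greatest_nat[of "\<lambda>x. x \<in> V" root level "card V"] root_in_V level_less_card by auto
  define c where "c = \<beta> v"
  have "c \<in> L v"
    using Suc.prems(3) v unfolding c_def L_colouring_def by blast
  then obtain \<alpha>1 k1 where steps1: "(\<alpha>, \<alpha>1) \<in> recolour_step V E L ^^ k1"
    and "k1 \<le> 3 * card V + 1" and "\<alpha>1 v = c"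
    using recolour_farthest_bound[OF Suc.prems(2) v farthest] by blast
  have "n = card (V - {v})"
    using Suc.hyps(2) v finite_V by simp
  moreover have "L_colouring (V - {v}) (delete_vertex_edges E v) (forbid_at_neighbours E L v c) (\<alpha>1(v := undefined))"
    using L_colouring_delete_vertex recolour_steps_colouring[OF steps1 Suc.prems(2)] \<open>\<alpha>1 v = c\<close> .
  moreover have "L_colouring (V - {v}) (delete_vertex_edges E v) (forbid_at_neighbours E L v c) (\<beta>(v := undefined))"
    using L_colouring_delete_vertex Suc.prems(3) c_def[symmetric] .
  ultimately obtain k2 where "2 * k2 \<le> 3 * n\<^sup>2 + 5 * n"
    and steps2: "(\<alpha>1(v := undefined), \<beta>(v := undefined))
           \<in> recolour_step (V - {v}) (delete_vertex_edges E v) (forbid_at_neighbours E L v c) ^^ k2"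
    using Suc.hyps(1)[OF _ connected_slack_assignment_delete_farthest[OF farthest]] by blast
  have "(\<alpha>1, \<beta>) \<in> recolour_step V E L ^^ k2"
    using recolour_steps_undelete_vertex[OF v \<open>c \<in> L v\<close> \<open>\<alpha>1 v = c\<close> c_def[symmetric] steps2] .
  with steps1 have "(\<alpha>, \<beta>) \<in> recolour_step V E L ^^ (k1 + k2)"
    by (rule relpow_trans)
  moreover have "2 * (k1 + k2) \<le> 3 * (card V)\<^sup>2 + 5 * card V"
    using \<open>k1 \<le> 3 * card V + 1\<close> \<open>2 * k2 \<le> 3 * n\<^sup>2 + 5 * n\<close> Suc.hyps(2)[symmetric]
    by (simp add: power2_eq_square)
  ultimately show ?case
    by blast
qed

theorem mainTheorem1:
  fixes V :: "'a set" and E :: "'a \<Rightarrow> 'a \<Rightarrow> bool" and L :: "'a \<Rightarrow> nat set"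
  assumes "simple_graph V E"
    and "graph_connected V E"
    and "\<forall>v\<in>V. finite (L v)"
    and "\<forall>v\<in>V. card (L v) \<ge> degree V E v + 1"
    and "\<exists>w\<in>V. card (L w) \<ge> degree V E w + 2"
  shows "\<forall>\<phi> \<psi>. L_colouring V E L \<phi> \<and> L_colouring V E L \<psi> \<longrightarrow>
           (\<exists>k. 2 * k \<le> 3 * (card V)^2 + 5 * card V \<and> (\<phi>, \<psi>) \<in> (recolour_step V E L) ^^ k)"
  using reconfiguration_distance assms unfolding connected_slack_assignment_def by blast

end
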